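(* Let $X_1,X_2,\ldots$ be i.i.d. with density $g(x;\Psi_0,\sigma_0)$, $\Psi_0\in\boldsymbol{\Psi}_m$, $\sigma_0>0$, and assume Conditions C1–C4. Let $K_0=\int_{\mathbb{R}}\log\{g(x;\Psi_0,\sigma_0)\}\,g(x;\Psi_0,\sigma_0)\,dx$ (finite by C2), $\Delta=v_0/\exp(K_0-1)$, $a=(1+\beta)/(2\beta)$, $b=2(\beta+1)/(\beta-1)$, $\epsilon_0=(3mbv_0/\sigma_0)^{-1/(1-a)}$, and let $\epsilon>0$ satisfy (D1) $\epsilon\le\epsilon_0$; (D2) $\epsilon\le (v_1/v_0)^{-2/(\beta+1)}$; (D3) $b^{-1}\log v_0+(1-b^{-1})\log v_1+\tfrac14(\beta-1)\log\epsilon\le K_0-1$. Then, almost surely, $$\lim_{n\to\infty}\Big\{\sup_{\Psi\in\boldsymbol{\Psi}_m,\ \sigma\in[\Delta,\infty)}\ell_n(\Psi,\sigma)-\ell_n(\Psi_0,\sigma_0)\Big\}=-\infty$$ and $$\lim_{n\to\infty}\Big\{\sup_{\Psi\in\boldsymbol{\Psi}_m,\ \sigma\in(0,\epsilon]}\ell_n(\Psi,\sigma)-\ell_n(\Psi_0,\sigma_0)\Big\}=-\infty.$$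
   Context: Fix a positive integer $m$. Let $f(x;0,1)$ be a probability density on $\mathbb{R}$, $f(x;\mu,\sigma)=\sigma^{-1}f((x-\mu)/\sigma;0,1)$, $\boldsymbol{\Psi}_m=\{\sum_{j=1}^m\alpha_j I(\mu_j\le\mu):\alpha_j\ge0,\sum_j\alpha_j=1,\mu_j\in\mathbb{R}\}$, $g(x;\Psi,\sigma)=\sum_{j=1}^m\alpha_j f(x;\mu_j,\sigma)$, $\ell_n(\Psi,\sigma)=\sum_{i=1}^n\log g(X_i;\Psi,\sigma)$. Conditions: (C1) if $g(\cdot;\Psi_1,\sigma_1)=g(\cdot;\Psi_2,\sigma_2)$ everywhere ($\Psi_i\in\boldsymbol{\Psi}_m,\sigma_i>0$) then $\Psi_1=\Psi_2,\sigma_1=\sigma_2$. (C2) $\int|\log g(x;\Psi_0,\sigma_0)|g(x;\Psi_0,\sigma_0)dx<\infty$. (C3) There exist $v_0,v_1>0$, $\beta>1$ with $f(x;0,1)\le\min\{v_0,v_1|x|^{-\beta}\}$ for all $x$. (C4) $f(x;0,1)$ is continuous. The constants $v_0,v_1,\beta$ in the claim are those of C3. (Such an $\epsilon$ exists since $\beta>1$.) *)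

theory Defs
  imports "HOL-Probability.Probability"
begin

definition ls_dens :: "(real \<Rightarrow> real) \<Rightarrow> real \<Rightarrow> real \<Rightarrow> real \<Rightarrow> real" where
  "ls_dens f0 mu sg x = f0 ((x - mu) / sg) / sg"

text \<open>A mixing distribution in Psi_m is given by weights alpha j and support points mu j, j < m.\<close>
definition valid_mix :: "nat \<Rightarrow> (nat \<Rightarrow> real) \<Rightarrow> bool" where
  "valid_mix m alpha \<longleftrightarrow> (\<forall>j<m. alpha j \<ge> 0) \<and> (\<Sum>j<m. alpha j) = 1"

definition mix_cdf :: "nat \<Rightarrow> (nat \<Rightarrow> real) \<Rightarrow> (nat \<Rightarrow> real) \<Rightarrow> real \<Rightarrow> real" where
  "mix_cdf m alpha mus t = (\<Sum>j<m. alpha j * (if mus j \<le> t then 1 else 0))"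

definition mix_dens :: "(real \<Rightarrow> real) \<Rightarrow> nat \<Rightarrow> (nat \<Rightarrow> real) \<Rightarrow> (nat \<Rightarrow> real) \<Rightarrow> real \<Rightarrow> real \<Rightarrow> real" where
  "mix_dens f0 m alpha mus sg x = (\<Sum>j<m. alpha j * ls_dens f0 (mus j) sg x)"

definition eln :: "real \<Rightarrow> ereal" where
  "eln x = (if x > 0 then ereal (ln x) else -\<infinity>)"

definition loglik :: "(real \<Rightarrow> real) \<Rightarrow> nat \<Rightarrow> (nat \<Rightarrow> real) \<Rightarrow> (nat \<Rightarrow> real) \<Rightarrow> real
    \<Rightarrow> (nat \<Rightarrow> 'w \<Rightarrow> real) \<Rightarrow> nat \<Rightarrow> 'w \<Rightarrow> ereal" where
  "loglik f0 m alpha mus sg X n w = (\<Sum>i<n. eln (mix_dens f0 m alpha mus sg (X i w)))"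

definition cond_C1 :: "(real \<Rightarrow> real) \<Rightarrow> nat \<Rightarrow> bool" where
  "cond_C1 f0 m \<longleftrightarrow> (\<forall>a1 u1 s1 a2 u2 s2. valid_mix m a1 \<and> valid_mix m a2 \<and> s1 > 0 \<and> s2 > 0 \<and>
      (\<forall>x. mix_dens f0 m a1 u1 s1 x = mix_dens f0 m a2 u2 s2 x) \<longrightarrow>
      mix_cdf m a1 u1 = mix_cdf m a2 u2 \<and> s1 = s2)"

end

theory Submission
  imports Defs
begin

text \<open>
  For \<open>\<sigma> \<ge> \<Delta>\<close> every mixture density is bounded by \<open>v\<^sub>0/\<sigma> \<le> exp (K\<^sub>0 - 1)\<close>, so
  \<open>\<ell>\<^sub>n(\<Psi>,\<sigma>) \<le> n (K\<^sub>0 - 1)\<close>, whereas a strong law gives \<open>\<ell>\<^sub>n(\<Psi>\<^sub>0,\<sigma>\<^sub>0) \<ge> n (K\<^sub>0 - 1/2)\<close>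
  eventually. For \<open>\<sigma> \<le> \<epsilon>\<close> a component density is at most \<open>v\<^sub>0/\<sigma>\<close> near its location and at most
  \<open>v\<^sub>1 \<sigma>\<^bsup>(\<beta>-1)/2\<^esup>\<close> at distance \<open>\<ge> \<sigma>\<^bsup>1-a\<^esup>\<close> from it. A law of large numbers that is uniform in the
  location shows that eventually at most a fraction \<open>1/b\<close> of the observations lie that close to
  one of the \<open>m\<close> locations (this is where D1 enters), and D2, D3 turn this into
  \<open>\<ell>\<^sub>n(\<Psi>,\<sigma>) \<le> n (K\<^sub>0 - 1)\<close> again. All almost sure statements come from exponential moment bounds
  and Borel-Cantelli: Hoeffding's lemma for bounded summands, and for \<open>log g\<^sub>0\<close>, which is only
  bounded above, a truncation at level \<open>-T\<close> whose deficit has a small moment generating function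
  because \<open>\<integral> g\<^sub>0\<^sup>a < \<infinity>\<close>.
\<close>

lemma (in prob_space) AE_eventually_sum_less_of_mgf_le:
  fixes Y :: "nat \<Rightarrow> 'a \<Rightarrow> real"
  assumes ind: "indep_vars (\<lambda>_. borel) Y UNIV"
    and l: "l > 0" and q: "q < exp (l * t)"
    and mgf: "\<And>i. (\<integral>\<^sup>+w. ennreal (exp (l * Y i w)) \<partial>M) \<le> ennreal q"
  shows "AE w in M. eventually (\<lambda>n. (\<Sum>i<n. Y i w) < real n * t) sequentially"
proof -
  have [measurable]: "\<And>i. Y i \<in> borel_measurable M"
    using ind unfolding indep_vars_def by auto
  define q' where "q' = max q 0"
  define r where "r = q' / exp (l * t)"
  have q': "q' \<ge> 0" by (simp add: q'_def)
  have r: "r \<ge> 0" "r < 1" using q by (auto simp: r_def q'_def)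
  define A where "A n = {w \<in> space M. real n * t \<le> (\<Sum>i<n. Y i w)}" for n
  have [measurable]: "A n \<in> sets M" for n unfolding A_def by measurable
  have "emeasure M (A n) \<le> ennreal (r ^ n)" for n
  proof -
    have "emeasure M (A n) \<le> ennreal (exp (- l * (real n * t))) *
        (\<integral>\<^sup>+w. ennreal (exp (l * (\<Sum>i<n. Y i w))) * indicator (space M) w \<partial>M)"
      unfolding A_def by (intro Chernoff_ineq_nn_integral_ge l) auto
    also have "(\<integral>\<^sup>+w. ennreal (exp (l * (\<Sum>i<n. Y i w))) * indicator (space M) w \<partial>M)
        = (\<integral>\<^sup>+w. (\<Prod>i<n. ennreal (exp (l * Y i w))) \<partial>M)"
      by (intro nn_integral_cong) (simp add: sum_distrib_left exp_sum prod_ennreal)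
    also have "\<dots> = (\<Prod>i<n. \<integral>\<^sup>+w. ennreal (exp (l * Y i w)) \<partial>M)"
      by (intro indep_vars_nn_integral indep_vars_compose2[OF indep_vars_subset[OF ind]]) auto
    also have "\<dots> \<le> (\<Prod>i<n. ennreal q')"
      by (intro prod_mono_ennreal order_trans[OF mgf]) (auto simp: q'_def)
    also have "\<dots> = ennreal (q' ^ n)"
      using q' by (simp add: ennreal_power)
    also have "ennreal (exp (- l * (real n * t))) * ennreal (q' ^ n) = ennreal (r ^ n)"
    proof -
      have "exp (- l * (real n * t)) * q' ^ n = (q' / exp (l * t)) ^ n"
        by (simp add: power_divide exp_of_nat_mult[symmetric] exp_minus field_simps)
      then show ?thesis
        using q' by (simp add: r_def ennreal_mult[symmetric] del: ennreal_mult' power_divide)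
    qed
    finally show ?thesis by (meson mult_left_mono zero_le)
  qed
  then have "measure M (A n) \<le> r ^ n" for n
    using r by (simp add: emeasure_eq_measure ennreal_le_iff)
  then have "summable (\<lambda>n. measure M (A n))"
    by (intro summable_comparison_test[OF _ summable_geometric[of r]]) (use r in auto)
  then have "AE w in M. eventually (\<lambda>n. w \<in> space M - A n) sequentially"
    by (intro borel_cantelli_AE1) (auto simp: emeasure_eq_measure)
  then show ?thesis
    by (rule AE_mp) (auto intro!: AE_I2 elim!: eventually_mono simp: A_def not_le)
qed

lemma (in prob_space) AE_eventually_sum_less_of_bounded:
  fixes Y :: "nat \<Rightarrow> 'a \<Rightarrow> real"
  assumes ind: "indep_vars (\<lambda>_. borel) Y UNIV"
    and bounded: "\<And>i. AE w in M. Y i w \<in> {lo..hi}"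
    and E: "\<And>i. expectation (Y i) \<le> c" and \<eta>: "\<eta> > 0"
  shows "AE w in M. eventually (\<lambda>n. (\<Sum>i<n. Y i w) < real n * (c + \<eta>)) sequentially"
proof -
  have [measurable]: "\<And>i. Y i \<in> borel_measurable M"
    using ind unfolding indep_vars_def by auto
  define d where "d = (hi - lo)\<^sup>2"
  define l where "l = \<eta> / (d + 1)"
  have d: "d \<ge> 0" by (simp add: d_def)
  have l: "l > 0" using \<eta> d by (simp add: l_def)
  have "l * d < \<eta>" using \<eta> d by (simp add: l_def field_simps)
  then have "l\<^sup>2 * d / 8 < l * \<eta>" using l \<eta> by (simp add: power2_eq_square field_simps)
  then have lq: "exp (l * c + l\<^sup>2 * d / 8) < exp (l * (c + \<eta>))" by (simp add: algebra_simps)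
  show ?thesis
  proof (rule AE_eventually_sum_less_of_mgf_le[OF ind l lq])
    fix i
    interpret Yi: interval_bounded_random_variable M "Y i" lo hi
    proof unfold_locales
      show "AE w in M. Y i w \<in> {lo..hi}" by (rule bounded)
    qed measurable
    define e where "e = expectation (Y i)"
    have "(\<integral>\<^sup>+w. ennreal (exp (l * Y i w)) \<partial>M)
        = (\<integral>\<^sup>+w. ennreal (exp (l * e)) * ennreal (exp (l * (Y i w - e))) \<partial>M)"
      by (intro nn_integral_cong)
         (simp add: ennreal_mult[symmetric] exp_add[symmetric] algebra_simps)
    also have "\<dots> = ennreal (exp (l * e)) * (\<integral>\<^sup>+w. ennreal (exp (l * (Y i w - e))) \<partial>M)"
      by (rule nn_integral_cmult) auto
    also have "\<dots> \<le> ennreal (exp (l * e)) * ennreal (exp (l\<^sup>2 * (hi - lo)\<^sup>2 / 8))"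
      by (intro mult_left_mono) (use Yi.Hoeffdings_lemma_nn_integral[OF l] in \<open>auto simp: e_def\<close>)
    also have "\<dots> = ennreal (exp (l * e + l\<^sup>2 * d / 8))"
      by (simp add: ennreal_mult[symmetric] exp_add d_def)
    also have "\<dots> \<le> ennreal (exp (l * c + l\<^sup>2 * d / 8))"
      using E[of i] l by (intro ennreal_leI) (simp add: e_def)
    finally show "(\<integral>\<^sup>+w. ennreal (exp (l * Y i w)) \<partial>M) \<le> ennreal (exp (l * c + l\<^sup>2 * d / 8))" .
  qed
qed

lemma ereal_diff_tendsto_MInfty:
  fixes F G :: "nat \<Rightarrow> ereal"
  assumes F: "eventually (\<lambda>n. F n \<le> ereal (real n * c)) sequentially"
    and G: "eventually (\<lambda>n. ereal (real n * d) \<le> G n) sequentially"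
    and cd: "c < d"
  shows "(\<lambda>n. F n - G n) \<longlonglongrightarrow> -\<infinity>"
  unfolding tendsto_MInfty
proof
  fix r :: real
  obtain N :: nat where N: "- r < real N * (d - c)"
    using reals_Archimedean3[of "d - c"] cd by auto
  show "eventually (\<lambda>n. F n - G n < ereal r) sequentially"
    using eventually_conj[OF F G] eventually_ge_at_top[of N]
  proof eventually_elim
    case (elim n)
    then have "F n - G n \<le> ereal (real n * c) - ereal (real n * d)"
      by (intro ereal_minus_mono) auto
    also have "\<dots> < ereal r"
    proof -
      have "real N * (d - c) \<le> real n * (d - c)"
        using elim cd by (intro mult_right_mono) auto
      then show ?thesis using N by (simp add: algebra_simps)
    qed
    finally show ?case .
  qed
qed

lemma sum_if_ex_le_sum_sum:
  fixes m n :: nat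
  shows "(\<Sum>i<n. if \<exists>j<m. P i j then 1 else 0 :: real) \<le> (\<Sum>j<m. \<Sum>i<n. if P i j then 1 else 0)"
proof -
  have "(\<Sum>i<n. if \<exists>j<m. P i j then 1 else 0 :: real) \<le> (\<Sum>i<n. \<Sum>j<m. if P i j then 1 else 0)"
  proof (intro sum_mono)
    fix i
    show "(if \<exists>j<m. P i j then 1 else 0 :: real) \<le> (\<Sum>j<m. if P i j then 1 else 0)"
    proof (cases "\<exists>j<m. P i j")
      case True
      then obtain j where "j < m" "P i j" by blast
      then have "(if P i j then 1 else 0 :: real) \<le> (\<Sum>j<m. if P i j then 1 else 0)"
        by (intro member_le_sum) auto
      with \<open>P i j\<close> True show ?thesis by simp
    qed (auto intro: sum_nonneg)
  qed
  then show ?thesis by (simp add: sum.swap[of _ "{..<n}"])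
qed

lemma powr_le_inverse_of_le_powr:
  fixes e C p :: real
  assumes "0 < e" "0 < C" "0 < p" "e \<le> C powr (- 1 / p)"
  shows "e powr p \<le> 1 / C"
proof -
  have "e powr p \<le> (C powr (- 1 / p)) powr p"
    using assms by (intro powr_mono2) auto
  also have "\<dots> = C powr (- 1)"
    using assms by (subst powr_powr) simp
  also have "\<dots> = 1 / C"
    using assms by (simp add: powr_minus_divide)
  finally show ?thesis .
qed

lemma ls_dens_nonneg: "(\<And>x. f0 x \<ge> 0) \<Longrightarrow> s > 0 \<Longrightarrow> ls_dens f0 mu s x \<ge> 0"
  by (simp add: ls_dens_def)

lemma ls_dens_le: "(\<And>x. f0 x \<le> v0) \<Longrightarrow> s > 0 \<Longrightarrow> ls_dens f0 mu s x \<le> v0 / s"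
  by (simp add: ls_dens_def divide_right_mono)

lemma ls_dens_le_tail:
  assumes f0_tail: "\<And>x. x \<noteq> 0 \<Longrightarrow> f0 x \<le> v1 * \<bar>x\<bar> powr (- beta)"
    and s: "s > 0" and rho: "rho > 0" "rho \<le> \<bar>x - mu\<bar>" and v1: "v1 \<ge> 0" and beta: "beta \<ge> 0"
  shows "ls_dens f0 mu s x \<le> v1 * s powr (beta - 1) * rho powr (- beta)"
proof -
  have "ls_dens f0 mu s x \<le> v1 * \<bar>(x - mu) / s\<bar> powr (- beta) / s"
    unfolding ls_dens_def using f0_tail[of "(x - mu) / s"] rho s by (intro divide_right_mono) auto
  also have "\<bar>(x - mu) / s\<bar> powr (- beta) = \<bar>x - mu\<bar> powr (- beta) * s powr beta"
    using s by (simp add: abs_divide powr_divide powr_minus field_simps)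
  also have "\<bar>x - mu\<bar> powr (- beta) \<le> rho powr (- beta)"
    using rho beta by (intro powr_mono2') auto
  then have "v1 * (\<bar>x - mu\<bar> powr (- beta) * s powr beta) / s \<le> v1 * (rho powr (- beta) * s powr beta) / s"
    using s v1 by (intro divide_right_mono mult_left_mono mult_right_mono) auto
  also have "v1 * (rho powr (- beta) * s powr beta) / s = v1 * s powr (beta - 1) * rho powr (- beta)"
    using s by (simp add: powr_diff)
  finally show ?thesis by simp
qed

lemma mix_dens_nonneg:
  "(\<And>x. f0 x \<ge> 0) \<Longrightarrow> s > 0 \<Longrightarrow> valid_mix m al \<Longrightarrow> mix_dens f0 m al mu s x \<ge> 0"
  unfolding mix_dens_def valid_mix_def by (intro sum_nonneg) (simp add: ls_dens_nonneg)

lemma mix_dens_le: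
  assumes va: "valid_mix m al" and le: "\<And>j. j < m \<Longrightarrow> ls_dens f0 (mu j) s x \<le> B"
  shows "mix_dens f0 m al mu s x \<le> B"
proof -
  have "mix_dens f0 m al mu s x \<le> (\<Sum>j<m. al j * B)"
    unfolding mix_dens_def using va le
    by (intro sum_mono mult_left_mono) (auto simp: valid_mix_def)
  also have "\<dots> = B" using va by (simp add: valid_mix_def sum_distrib_right[symmetric])
  finally show ?thesis .
qed

lemma mix_dens_measurable [measurable]:
  assumes [measurable]: "f0 \<in> borel_measurable borel"
  shows "mix_dens f0 m al mu s \<in> borel_measurable borel"
  unfolding mix_dens_def[abs_def] ls_dens_def by measurable

lemma nn_integral_abs_powr_tail_finite:
  fixes R gam :: real
  assumes gam: "gam > 1" and R: "R > 0"
  shows "(\<integral>\<^sup>+x. ennreal (indicator {x. R \<le> \<bar>x\<bar>} x * \<bar>x\<bar> powr (- gam)) \<partial>lborel) < \<infinity>"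
proof -
  define h where "h x = indicator {R..} x * x powr (- gam)" for x :: real
  have [measurable]: "h \<in> borel_measurable borel" unfolding h_def by measurable
  have "((\<lambda>x. x powr (- gam)) has_integral - (R powr (- gam + 1)) / (- gam + 1)) {R..}"
    by (rule has_integral_powr_to_inf) (use gam R in auto)
  then have "(\<integral>\<^sup>+x. ennreal (h x) \<partial>lborel) = ennreal (- (R powr (- gam + 1)) / (- gam + 1))"
    unfolding h_def by (rule nn_integral_has_integral_lebesgue[rotated]) simp
  then have h_finite: "(\<integral>\<^sup>+x. ennreal (h x) \<partial>lborel) < \<infinity>" by simp
  have reflect: "(\<integral>\<^sup>+x. ennreal (h (- x)) \<partial>lborel) = (\<integral>\<^sup>+x. ennreal (h x) \<partial>lborel)"
    using nn_integral_real_affine[of "\<lambda>x. ennreal (h x)" "-1" 0] by simp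
  have "(\<integral>\<^sup>+x. ennreal (indicator {x. R \<le> \<bar>x\<bar>} x * \<bar>x\<bar> powr (- gam)) \<partial>lborel)
      = (\<integral>\<^sup>+x. ennreal (h x) + ennreal (h (- x)) \<partial>lborel)"
    by (intro nn_integral_cong) (use R in \<open>auto simp: h_def indicator_def\<close>)
  also have "\<dots> = (\<integral>\<^sup>+x. ennreal (h x) \<partial>lborel) + (\<integral>\<^sup>+x. ennreal (h (- x)) \<partial>lborel)"
    by (rule nn_integral_add) auto
  also have "\<dots> < \<infinity>" using h_finite reflect by simp
  finally show ?thesis .
qed

lemma mix_dens_powr_nn_integral_finite:
  assumes f0_nonneg: "\<And>x. f0 x \<ge> 0" and f0_le: "\<And>x. f0 x \<le> v0"
    and f0_tail: "\<And>x. x \<noteq> 0 \<Longrightarrow> f0 x \<le> v1 * \<bar>x\<bar> powr (- beta)"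
    and [measurable]: "f0 \<in> borel_measurable borel"
    and v1: "v1 > 0" and beta: "beta > 0" and va: "valid_mix m al" and s: "s > 0"
    and a: "a > 0" "beta * a > 1"
  shows "(\<integral>\<^sup>+x. ennreal (mix_dens f0 m al mu s x powr a) \<partial>lborel) < \<infinity>"
proof -
  define g where "g = mix_dens f0 m al mu s"
  have g_nonneg: "g x \<ge> 0" for x using mix_dens_nonneg[OF f0_nonneg s va] by (simp add: g_def)
  define R where "R = 2 * (\<Sum>j<m. \<bar>mu j\<bar>) + 1"
  have R: "R > 0" by (simp add: R_def sum_nonneg add_nonneg_pos)
  define C where "C = v1 * s powr (beta - 1)"
  have C: "C > 0" using v1 s by (simp add: C_def)
  define G where "G x = (v0 / s) powr a * indicator {x. \<bar>x\<bar> < R} x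
     + (C powr a * 2 powr (beta * a)) * (indicator {x. R \<le> \<bar>x\<bar>} x * \<bar>x\<bar> powr (- (beta * a)))" for x
  have g_le_G: "g x powr a \<le> G x" for x
  proof (cases "\<bar>x\<bar> < R")
    case True
    have "g x \<le> v0 / s" unfolding g_def
      by (intro mix_dens_le[OF va] ls_dens_le f0_le s)
    then have "g x powr a \<le> (v0 / s) powr a" using g_nonneg[of x] a by (intro powr_mono2) auto
    then show ?thesis using True R by (simp add: G_def indicator_def)
  next
    case False
    then have x: "R \<le> \<bar>x\<bar>" "\<bar>x\<bar> / 2 > 0" using R by auto
    have "ls_dens f0 (mu j) s x \<le> C * (\<bar>x\<bar> / 2) powr (- beta)" if j: "j < m" for j
      unfolding C_def
    proof (rule ls_dens_le_tail[OF f0_tail s])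
      have "\<bar>mu j\<bar> \<le> (\<Sum>j<m. \<bar>mu j\<bar>)" using j by (intro member_le_sum) auto
      then show "\<bar>x\<bar> / 2 \<le> \<bar>x - mu j\<bar>"
        using x abs_triangle_ineq2[of x "mu j"] by (simp add: R_def)
    qed (use x v1 beta in auto)
    then have "g x \<le> C * (\<bar>x\<bar> / 2) powr (- beta)" unfolding g_def
      by (intro mix_dens_le[OF va])
    then have "g x powr a \<le> (C * (\<bar>x\<bar> / 2) powr (- beta)) powr a"
      using g_nonneg[of x] a by (intro powr_mono2) auto
    also have "\<dots> = C powr a * (\<bar>x\<bar> / 2) powr (- (beta * a))"
      using C x by (simp add: powr_mult powr_powr)
    also have "(\<bar>x\<bar> / 2) powr (- (beta * a)) = 2 powr (beta * a) * \<bar>x\<bar> powr (- (beta * a))"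
      using x by (simp add: powr_divide powr_minus field_simps)
    finally show ?thesis using x by (simp add: G_def indicator_def mult.assoc)
  qed
  have "(\<integral>\<^sup>+x. ennreal (g x powr a) \<partial>lborel) \<le> (\<integral>\<^sup>+x. ennreal (G x) \<partial>lborel)"
    using g_le_G by (intro nn_integral_mono) (simp add: ennreal_leI)
  also have "\<dots> = (\<integral>\<^sup>+x. ennreal ((v0 / s) powr a) * indicator {x. \<bar>x\<bar> < R} x
      + ennreal (C powr a * 2 powr (beta * a))
        * ennreal (indicator {x. R \<le> \<bar>x\<bar>} x * \<bar>x\<bar> powr (- (beta * a))) \<partial>lborel)"
    by (intro nn_integral_cong)
       (simp add: G_def ennreal_plus[symmetric] ennreal_mult[symmetric] indicator_def del: ennreal_plus)
  also have "\<dots> = ennreal ((v0 / s) powr a) * emeasure lborel {x. \<bar>x\<bar> < R}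
      + ennreal (C powr a * 2 powr (beta * a))
        * (\<integral>\<^sup>+x. ennreal (indicator {x. R \<le> \<bar>x\<bar>} x * \<bar>x\<bar> powr (- (beta * a))) \<partial>lborel)"
    by (subst nn_integral_add) (auto simp: nn_integral_cmult)
  also have "\<dots> < \<infinity>"
  proof -
    have "{x::real. \<bar>x\<bar> < R} = {-R<..<R}" by auto
    then have "emeasure lborel {x::real. \<bar>x\<bar> < R} < \<infinity>" using R by simp
    moreover have "(\<integral>\<^sup>+x. ennreal (indicator {x. R \<le> \<bar>x\<bar>} x * \<bar>x\<bar> powr (- (beta * a))) \<partial>lborel) < \<infinity>"
      by (rule nn_integral_abs_powr_tail_finite) (use a R in auto)
    ultimately show ?thesis by (simp add: ennreal_mult_less_top)
  qed
  finally show ?thesis by (simp add: g_def)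
qed

lemma eln_le: "y \<le> u \<Longrightarrow> u > 0 \<Longrightarrow> eln y \<le> ereal (ln u)"
  by (auto simp: eln_def)

lemma sum_eln_le:
  "(\<And>i. i < n \<Longrightarrow> eln (y i) \<le> ereal (c i)) \<Longrightarrow> (\<Sum>i<n. eln (y i)) \<le> ereal (\<Sum>i<n. c i)"
  unfolding sum_ereal[symmetric] by (intro sum_mono) auto

lemma loglik_SUP_large_sigma_le:
  assumes f0_le: "\<And>x. f0 x \<le> v0" and v0: "v0 > 0"
  shows "(SUP p \<in> {(al, mu, s). valid_mix m al \<and> s \<ge> v0 / exp c}.
           loglik f0 m (fst p) (fst (snd p)) (snd (snd p)) X n w) \<le> ereal (real n * c)"
proof (rule SUP_least)
  fix p :: "(nat \<Rightarrow> real) \<times> (nat \<Rightarrow> real) \<times> real"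
  assume "p \<in> {(al, mu, s). valid_mix m al \<and> s \<ge> v0 / exp c}"
  then obtain al mu s where p: "p = (al, mu, s)" and va: "valid_mix m al" and s: "v0 / exp c \<le> s"
    by auto
  have s_pos: "s > 0" using s v0 by (smt (verit) divide_pos_pos exp_gt_zero)
  have "mix_dens f0 m al mu s x \<le> exp c" for x
  proof -
    have "mix_dens f0 m al mu s x \<le> v0 / s"
      by (intro mix_dens_le[OF va] ls_dens_le f0_le s_pos)
    also have "\<dots> \<le> exp c" using s s_pos by (simp add: field_simps)
    finally show ?thesis .
  qed
  then have "loglik f0 m al mu s X n w \<le> ereal (\<Sum>i<n. c)"
    unfolding loglik_def by (intro sum_eln_le) (metis eln_le exp_gt_zero ln_exp)
  then show "loglik f0 m (fst p) (fst (snd p)) (snd (snd p)) X n w \<le> ereal (real n * c)"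
    by (simp add: p)
qed

lemma loglik_le_of_few_close:
  fixes X :: "nat \<Rightarrow> 'w \<Rightarrow> real"
  assumes f0_le: "\<And>x. f0 x \<le> v0" and f0_tail: "\<And>x. x \<noteq> 0 \<Longrightarrow> f0 x \<le> v1 * \<bar>x\<bar> powr (- beta)"
    and v0: "v0 > 0" and v1: "v1 > 0" and beta: "beta \<ge> 0"
    and va: "valid_mix m al" and s: "s > 0" and rho: "rho > 0"
    and tail_le_peak: "v1 * s powr (beta - 1) * rho powr (- beta) \<le> v0 / s"
    and close: "(\<Sum>i<n. if \<exists>j<m. \<bar>X i w - mu j\<bar> < rho then 1 else 0) \<le> real n * p"
  shows "loglik f0 m al mu s X n w
    \<le> ereal (real n * (p * ln (v0 / s) + (1 - p) * ln (v1 * s powr (beta - 1) * rho powr (- beta))))"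
proof -
  define A where "A = ln (v0 / s)"
  define B where "B = ln (v1 * s powr (beta - 1) * rho powr (- beta))"
  define near where "near i \<longleftrightarrow> (\<exists>j<m. \<bar>X i w - mu j\<bar> < rho)" for i
  define N where "N = (\<Sum>i<n. if near i then 1 else 0 :: real)"
  have "loglik f0 m al mu s X n w \<le> ereal (\<Sum>i<n. if near i then A else B)"
    unfolding loglik_def
  proof (rule sum_eln_le)
    fix i
    show "eln (mix_dens f0 m al mu s (X i w)) \<le> ereal (if near i then A else B)"
    proof (cases "near i")
      case True
      have "mix_dens f0 m al mu s (X i w) \<le> v0 / s"
        by (intro mix_dens_le[OF va] ls_dens_le f0_le s)
      then show ?thesis using True v0 s by (simp add: A_def eln_le)
    next
      case False
      have "ls_dens f0 (mu j) s (X i w) \<le> v1 * s powr (beta - 1) * rho powr (- beta)" if "j < m" for j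
      proof (rule ls_dens_le_tail[OF f0_tail s rho(1)])
        show "rho \<le> \<bar>X i w - mu j\<bar>" using False that unfolding near_def by (meson not_less)
      qed (use v1 beta in auto)
      then have "mix_dens f0 m al mu s (X i w) \<le> v1 * s powr (beta - 1) * rho powr (- beta)"
        by (rule mix_dens_le[OF va])
      then show ?thesis using False v1 s rho by (simp add: B_def eln_le)
    qed
  qed
  also have "(\<Sum>i<n. if near i then A else B) = (\<Sum>i<n. B + (A - B) * (if near i then 1 else 0))"
    by (intro sum.cong) auto
  also have "\<dots> = real n * B + (A - B) * N"
    by (simp add: sum.distrib N_def sum_distrib_left)
  also have "\<dots> \<le> real n * B + (A - B) * (real n * p)"
  proof -
    have "B \<le> A" unfolding A_def B_def
      using tail_le_peak v0 v1 s rho by (subst ln_le_cancel_iff) auto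
    then show ?thesis using close by (intro add_left_mono mult_left_mono) (auto simp: N_def near_def)
  qed
  also have "\<dots> = real n * (p * A + (1 - p) * B)" by (simp add: algebra_simps)
  finally show ?thesis by (simp add: A_def B_def)
qed

lemma tail_le_peak_of_le_powr:
  fixes v0 v1 beta s :: real
  assumes v: "v0 > 0" "v1 > 0" and beta: "beta > -1"
    and s: "0 < s" "s \<le> (v1 / v0) powr (- 2 / (beta + 1))"
  shows "v1 * s powr ((beta - 1) / 2) \<le> v0 / s"
proof -
  have "s powr ((beta + 1) / 2) \<le> ((v1 / v0) powr (- 2 / (beta + 1))) powr ((beta + 1) / 2)"
    using s beta by (intro powr_mono2) auto
  also have "\<dots> = (v1 / v0) powr (- 1)"
  proof -
    have e: "- 2 / (beta + 1) * ((beta + 1) / 2) = - 1" using beta by (simp add: field_simps)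
    show ?thesis unfolding powr_powr e ..
  qed
  also have "\<dots> = v0 / v1" using v by (simp add: powr_minus_divide)
  finally have "v1 * s powr ((beta + 1) / 2) \<le> v0" using v by (simp add: field_simps)
  moreover have "s powr ((beta + 1) / 2) = s powr ((beta - 1) / 2) * s powr 1"
    unfolding powr_add[symmetric] by (simp add: field_simps)
  ultimately show ?thesis using s by (simp add: field_simps)
qed

lemma small_sigma_exponent:
  fixes beta b v0 v1 s :: real
  assumes beta: "beta > 1" and b: "b = 2 * (beta + 1) / (beta - 1)" and pos: "v0 > 0" "v1 > 0" "s > 0"
  shows "1 / b * ln (v0 / s) + (1 - 1 / b) * ln (v1 * s powr ((beta - 1) / 2))
    = ln v0 / b + (1 - 1 / b) * ln v1 + (beta - 1) / 4 * ln s"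
proof -
  define q where "q = 1 / b"
  have q: "q * (beta + 1) = (beta - 1) / 2" using beta by (simp add: q_def b field_simps)
  have "q * (ln v0 - ln s) + (1 - q) * (ln v1 + (beta - 1) / 2 * ln s)
      = q * ln v0 + (1 - q) * ln v1 + ((beta - 1) / 2 - q * (beta + 1) / 2) * ln s"
    by (simp add: field_simps)
  also have "\<dots> = q * ln v0 + (1 - q) * ln v1 + (beta - 1) / 4 * ln s"
    by (simp add: q)
  finally show ?thesis using pos by (simp add: q_def ln_div ln_mult ln_powr)
qed

lemma loglik_SUP_small_sigma_le:
  fixes X :: "nat \<Rightarrow> 'w \<Rightarrow> real"
  assumes f0_le: "\<And>x. f0 x \<le> v0" and f0_tail: "\<And>x. x \<noteq> 0 \<Longrightarrow> f0 x \<le> v1 * \<bar>x\<bar> powr (- beta)"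
    and v0: "v0 > 0" and v1: "v1 > 0" and beta: "beta > 1"
    and a: "a = (1 + beta) / (2 * beta)" and b: "b = 2 * (beta + 1) / (beta - 1)"
    and eps: "0 < eps" "eps \<le> (v1 / v0) powr (- 2 / (beta + 1))"
    and count: "\<And>\<mu>. (\<Sum>i<n. if \<bar>X i w - \<mu>\<bar> < eps powr (1 - a) then 1 else 0) \<le> real n * tau"
    and tau: "real m * tau \<le> 1 / b"
    and c: "ln v0 / b + (1 - 1 / b) * ln v1 + (beta - 1) / 4 * ln eps \<le> c"
  shows "(SUP p \<in> {(al, mu, s). valid_mix m al \<and> 0 < s \<and> s \<le> eps}.
           loglik f0 m (fst p) (fst (snd p)) (snd (snd p)) X n w) \<le> ereal (real n * c)"
proof (rule SUP_least)
  fix p :: "(nat \<Rightarrow> real) \<times> (nat \<Rightarrow> real) \<times> real"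
  assume "p \<in> {(al, mu, s). valid_mix m al \<and> 0 < s \<and> s \<le> eps}"
  then obtain al mu s where p: "p = (al, mu, s)" and va: "valid_mix m al" and s: "0 < s" "s \<le> eps"
    by auto
  have a1: "a < 1" and b0: "b > 0" using beta by (auto simp: a b field_simps)
  define rho where "rho = s powr (1 - a)"
  have rho: "rho > 0" "rho \<le> eps powr (1 - a)"
    using s a1 by (auto simp: rho_def intro: powr_mono2)
  have tail: "v1 * s powr (beta - 1) * rho powr (- beta) = v1 * s powr ((beta - 1) / 2)"
  proof -
    have "s powr (beta - 1) * rho powr (- beta) = s powr (beta - 1) * s powr ((1 - a) * (- beta))"
      unfolding rho_def powr_powr ..
    also have "\<dots> = s powr ((beta - 1) + (1 - a) * (- beta))"
      by (rule powr_add[symmetric])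
    also have "(beta - 1) + (1 - a) * (- beta) = (beta - 1) / 2"
      using beta by (simp add: a field_simps)
    finally show ?thesis by simp
  qed
  have "(\<Sum>i<n. if \<exists>j<m. \<bar>X i w - mu j\<bar> < rho then 1 else 0 :: real)
      \<le> (\<Sum>j<m. \<Sum>i<n. if \<bar>X i w - mu j\<bar> < rho then 1 else 0)"
    by (rule sum_if_ex_le_sum_sum)
  also have "\<dots> \<le> (\<Sum>j<m. real n * tau)"
  proof (intro sum_mono)
    fix j
    have "(\<Sum>i<n. if \<bar>X i w - mu j\<bar> < rho then 1 else 0)
        \<le> (\<Sum>i<n. if \<bar>X i w - mu j\<bar> < eps powr (1 - a) then 1 else 0 :: real)"
      using rho by (intro sum_mono) auto
    then show "(\<Sum>i<n. if \<bar>X i w - mu j\<bar> < rho then 1 else 0) \<le> real n * tau"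
      using count[of "mu j"] by linarith
  qed
  also have "\<dots> = real n * (real m * tau)" by (simp add: algebra_simps)
  also have "\<dots> \<le> real n * (1 / b)" using tau by (intro mult_left_mono) auto
  finally have close: "(\<Sum>i<n. if \<exists>j<m. \<bar>X i w - mu j\<bar> < rho then 1 else 0) \<le> real n * (1 / b)" .
  have "loglik f0 m al mu s X n w
      \<le> ereal (real n * (1 / b * ln (v0 / s) + (1 - 1 / b) * ln (v1 * s powr ((beta - 1) / 2))))"
    using loglik_le_of_few_close[where X = X and w = w, OF f0_le f0_tail v0 v1 _ va s(1) rho(1) _ close] tail
      tail_le_peak_of_le_powr[OF v0 v1 _ s(1)] s eps beta by simp
  also have "\<dots> \<le> ereal (real n * c)"
  proof -
    have "(beta - 1) / 4 * ln s \<le> (beta - 1) / 4 * ln eps"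
      using s beta by (intro mult_left_mono) auto
    then show ?thesis
      using small_sigma_exponent[OF beta b v0 v1 s(1)] c by (simp add: mult_left_mono)
  qed
  finally show "loglik f0 m (fst p) (fst (snd p)) (snd (snd p)) X n w \<le> ereal (real n * c)"
    by (simp add: p)
qed

lemma mult_exp_truncated_neg_ln_le:
  fixes y l T :: real
  assumes y: "y \<ge> 0"
  shows "y * exp (l * max (- T - ln y) 0) \<le> y + exp (- (l * T)) * y powr (1 - l)"
proof (cases "y > 0 \<and> ln y < - T")
  case True
  then have "y * exp (l * max (- T - ln y) 0) = exp (ln y) * exp (l * (- T - ln y))"
    by simp
  also have "\<dots> = exp (- (l * T)) * exp ((1 - l) * ln y)"
    by (simp add: exp_add[symmetric] algebra_simps)
  also have "\<dots> = exp (- (l * T)) * y powr (1 - l)"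
    using True by (simp add: powr_def mult.commute)
  finally show ?thesis using y by simp
next
  case False
  then have "y = 0 \<or> max (- T - ln y) 0 = 0" using y by auto
  then show ?thesis using y by auto
qed

lemma exists_exp_neg_mult_less:
  fixes l I \<delta> :: real
  assumes l: "l > 0" and I: "I \<ge> 0" and \<delta>: "\<delta> > 0"
  obtains T where "T \<ge> 0" "exp (- (l * T)) * I < \<delta>"
proof
  define T where "T = I / (\<delta> * l)"
  show T: "T \<ge> 0" using I \<delta> l by (simp add: T_def)
  have "exp (- (l * T)) * I = I / exp (l * T)" by (simp add: exp_minus field_simps)
  also have "\<dots> \<le> I / (1 + l * T)"
    using I T l by (intro divide_left_mono exp_ge_add_one_self) (auto simp: add_pos_nonneg)
  also have "\<dots> = I * \<delta> / (\<delta> + I)" using \<delta> l by (simp add: T_def field_simps)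
  also have "\<dots> < \<delta>" using \<delta> I by (simp add: field_simps)
  finally show "exp (- (l * T)) * I < \<delta>" .
qed

lemma abs_floor_le_ceiling:
  fixes y R :: real
  assumes "\<bar>y\<bar> \<le> R"
  shows "\<bar>\<lfloor>y\<rfloor>\<bar> \<le> \<lceil>R\<rceil>"
proof -
  have "of_int \<lfloor>y\<rfloor> \<le> y" "y < of_int \<lfloor>y\<rfloor> + 1" "R \<le> of_int \<lceil>R\<rceil>" by linarith+
  then have "\<lfloor>y\<rfloor> \<le> \<lceil>R\<rceil>" "- \<lceil>R\<rceil> < \<lfloor>y\<rfloor> + 1" using assms by linarith+
  then show ?thesis by linarith
qed

text \<open>
  The window with \<open>k = \<lfloor>\<mu>/h\<rfloor>\<close> contains \<open>(\<mu> - r, \<mu> + r)\<close>, so finitely many windows suffice for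
  \<open>\<bar>\<mu>\<bar> \<le> L + r\<close>; all other such intervals lie in the tail \<open>\<bar>y\<bar> > L\<close>.
\<close>
lemma count_near_le_of_window_counts:
  fixes x :: "nat \<Rightarrow> real" and t :: real
  assumes h: "h > 0"
    and window: "\<And>k::int. \<bar>k\<bar> \<le> \<lceil>(L + r) / h\<rceil> \<Longrightarrow>
      (\<Sum>i<n. indicator {of_int k * h - r .. of_int k * h + h + r} (x i)) \<le> t"
    and tail: "(\<Sum>i<n. indicator {y. L < \<bar>y\<bar>} (x i)) \<le> t"
  shows "(\<Sum>i<n. if \<bar>x i - \<mu>\<bar> < r then 1 else 0) \<le> t"
proof (cases "\<bar>\<mu>\<bar> \<le> L + r")
  case True
  define k where "k = \<lfloor>\<mu> / h\<rfloor>"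
  have k: "of_int k * h \<le> \<mu>" "\<mu> < of_int k * h + h"
    using floor_divide_lower[OF h, of \<mu>] floor_divide_upper[OF h, of \<mu>]
    by (auto simp: k_def algebra_simps)
  have "\<bar>\<mu> / h\<bar> \<le> (L + r) / h" using True h by (simp add: abs_divide divide_right_mono)
  then have "\<bar>k\<bar> \<le> \<lceil>(L + r) / h\<rceil>" unfolding k_def by (rule abs_floor_le_ceiling)
  then have "(\<Sum>i<n. indicator {of_int k * h - r .. of_int k * h + h + r} (x i)) \<le> t" by (rule window)
  moreover have "(\<Sum>i<n. if \<bar>x i - \<mu>\<bar> < r then 1 else 0)
      \<le> (\<Sum>i<n. indicator {of_int k * h - r .. of_int k * h + h + r} (x i) :: real)"
    by (intro sum_mono) (use k in \<open>auto simp: indicator_def abs_less_iff\<close>)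
  ultimately show ?thesis by linarith
next
  case False
  have "(\<Sum>i<n. if \<bar>x i - \<mu>\<bar> < r then 1 else 0) \<le> (\<Sum>i<n. indicator {y. L < \<bar>y\<bar>} (x i) :: real)"
    by (intro sum_mono) (use False in \<open>auto simp: indicator_def abs_less_iff\<close>)
  then show ?thesis using tail by linarith
qed

locale iid_sample = prob_space M for M :: "'a measure" +
  fixes X :: "nat \<Rightarrow> 'a \<Rightarrow> real" and g :: "real \<Rightarrow> real"
  assumes indep: "indep_vars (\<lambda>_. borel) X UNIV"
    and distr: "\<And>i. distributed M lborel (X i) (\<lambda>x. ennreal (g x))"
    and g_nonneg: "\<And>x. g x \<ge> 0"
begin

lemma random_variable_X [measurable]: "X i \<in> borel_measurable M"
  using indep unfolding indep_vars_def by auto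

lemma g_measurable [measurable]: "g \<in> borel_measurable borel"
  using distributed_real_measurable[OF _ distr[of 0]] g_nonneg by auto

lemma expectation_eq:
  assumes [measurable]: "\<psi> \<in> borel_measurable borel"
  shows "expectation (\<lambda>w. \<psi> (X i w)) = (\<integral>x. g x * \<psi> x \<partial>lborel)"
  using distributed_integral[OF distr[of i], of \<psi>] g_nonneg by simp

lemma nn_integral_eq:
  assumes [measurable]: "\<phi> \<in> borel_measurable borel"
  shows "(\<integral>\<^sup>+w. \<phi> (X i w) \<partial>M) = (\<integral>\<^sup>+x. ennreal (g x) * \<phi> x \<partial>lborel)"
  using distributed_nn_integral[OF distr[of i], of \<phi>] by simp

lemma nn_integral_g: "(\<integral>\<^sup>+x. ennreal (g x) \<partial>lborel) = 1"
  using nn_integral_eq[of "\<lambda>_. 1" 0] by (simp add: emeasure_space_1)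

lemma integrable_g: "integrable lborel g"
  using nn_integral_g g_nonneg by (intro integrableI_nonneg) (auto simp: less_top[symmetric])

lemma AE_g_pos: "AE w in M. \<forall>i. g (X i w) > 0"
proof (subst AE_all_countable, intro allI)
  fix i
  have "emeasure M (X i -` {x. g x \<le> 0} \<inter> space M)
      = (\<integral>\<^sup>+x. ennreal (g x) * indicator {x. g x \<le> 0} x \<partial>lborel)"
    by (rule distributed_emeasure[OF distr]) measurable
  also have "\<dots> = 0"
    by (subst nn_integral_0_iff_AE) (auto simp: indicator_def antisym g_nonneg)
  finally show "AE w in M. g (X i w) > 0"
    by (subst AE_iff_measurable[OF _ refl]) (auto simp: not_less Int_def vimage_def conj_commute)
qed

lemma integral_g_indicator_Icc_le:
  assumes g_le: "\<And>x. g x \<le> c0" and lu: "lo \<le> hi"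
  shows "(\<integral>x. g x * indicator {lo..hi} x \<partial>lborel) \<le> c0 * (hi - lo)"
proof -
  have "(\<integral>x. g x * indicator {lo..hi} x \<partial>lborel) \<le> (\<integral>x. c0 * indicator {lo..hi} x \<partial>lborel)"
  proof (rule integral_mono)
    show "integrable lborel (\<lambda>x. g x * indicator {lo..hi} x)"
      by (rule Bochner_Integration.integrable_bound[OF integrable_g])
         (auto intro!: AE_I2 simp: indicator_def g_nonneg)
    show "integrable lborel (\<lambda>x::real. c0 * indicator {lo..hi} x)"
      by (intro integrable_mult_right integrable_real_indicator) (auto simp: emeasure_lborel_Icc_eq)
  qed (auto simp: indicator_def g_le)
  also have "\<dots> = c0 * (hi - lo)" using lu by simp
  finally show ?thesis .
qed

lemma integral_g_tail_small:
  assumes e: "e > 0"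
  obtains L :: nat where "(\<integral>x. g x * indicator {x. real L < \<bar>x\<bar>} x \<partial>lborel) < e"
proof -
  define t where "t L x = g x * indicator {x. real L < \<bar>x\<bar>} x" for L :: nat and x :: real
  have [measurable]: "t L \<in> borel_measurable borel" for L unfolding t_def by measurable
  have "(\<lambda>L. integral\<^sup>L lborel (t L)) \<longlonglongrightarrow> integral\<^sup>L lborel (\<lambda>x::real. 0::real)"
  proof (rule integral_dominated_convergence[where w = g])
    show "AE x in lborel. (\<lambda>L. t L x) \<longlonglongrightarrow> 0"
    proof (intro AE_I2 tendsto_eventually)
      fix x :: real
      obtain N :: nat where "\<bar>x\<bar> \<le> real N" using real_arch_simple by blast
      then show "eventually (\<lambda>L. t L x = 0) sequentially"
        unfolding eventually_sequentially by (intro exI[of _ N]) (auto simp: t_def indicator_def)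
    qed
    show "AE x in lborel. norm (t L x) \<le> g x" for L
      using g_nonneg by (auto simp: t_def indicator_def)
  qed (auto simp: t_def integrable_g)
  then have "eventually (\<lambda>L. integral\<^sup>L lborel (t L) < e) sequentially"
    using e by (simp add: order_tendsto_iff)
  then obtain L where "integral\<^sup>L lborel (t L) < e" unfolding eventually_sequentially by blast
  then show ?thesis using that unfolding t_def[abs_def] by blast
qed

lemma AE_eventually_count_less:
  assumes [measurable]: "S \<in> sets borel" and p: "(\<integral>x. g x * indicator S x \<partial>lborel) < t"
  shows "AE w in M. eventually (\<lambda>n. (\<Sum>i<n. indicator S (X i w)) < real n * t) sequentially"
proof -
  have "expectation (\<lambda>w. indicator S (X i w)) \<le> (\<integral>x. g x * indicator S x \<partial>lborel)" for i
    by (subst expectation_eq) auto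
  then have "AE w in M. eventually (\<lambda>n. (\<Sum>i<n. indicator S (X i w))
      < real n * ((\<integral>x. g x * indicator S x \<partial>lborel) + (t - (\<integral>x. g x * indicator S x \<partial>lborel))))
      sequentially"
    using p by (intro AE_eventually_sum_less_of_bounded[where lo = 0 and hi = 1]
        indep_vars_compose2[OF indep]) (auto simp: indicator_def)
  then show ?thesis by simp
qed

lemma AE_eventually_uniform_count_le:
  assumes g_le: "\<And>x. g x \<le> c0" and r: "r > 0" and tau: "3 * c0 * r \<le> tau" "tau > 0"
  shows "AE w in M. eventually (\<lambda>n. \<forall>\<mu>.
    (\<Sum>i<n. if \<bar>X i w - \<mu>\<bar> < r then 1 else 0) \<le> real n * tau) sequentially"
proof -
  define h where "h = r / 2"
  have h: "h > 0" using r by (simp add: h_def)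
  define W where "W k = {of_int k * h - r .. of_int k * h + h + r}" for k :: int
  have "(\<integral>x. g x * indicator (W k) x \<partial>lborel) < tau" for k
  proof -
    have "(\<integral>x. g x * indicator (W k) x \<partial>lborel) \<le> c0 * (h + 2 * r)"
      unfolding W_def using integral_g_indicator_Icc_le[OF g_le, of "of_int k * h - r" "of_int k * h + h + r"] r h
      by (simp add: algebra_simps)
    also have "\<dots> = 5 / 6 * (3 * c0 * r)" by (simp add: h_def)
    finally show ?thesis using tau by linarith
  qed
  then have AE_window: "AE w in M. \<forall>k\<in>{-K..K}.
      eventually (\<lambda>n. (\<Sum>i<n. indicator (W k) (X i w)) < real n * tau) sequentially" for K
    by (intro AE_finite_allI AE_eventually_count_less) (auto simp: W_def)
  obtain L :: nat where "(\<integral>x. g x * indicator {x. real L < \<bar>x\<bar>} x \<partial>lborel) < tau"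
    using integral_g_tail_small tau(2) by blast
  then have AE_tail: "AE w in M.
      eventually (\<lambda>n. (\<Sum>i<n. indicator {x. real L < \<bar>x\<bar>} (X i w)) < real n * tau) sequentially"
    by (intro AE_eventually_count_less) auto
  define K where "K = \<lceil>(real L + r) / h\<rceil>"
  show ?thesis
    using AE_window[of K] AE_tail
  proof eventually_elim
    case (elim w)
    from eventually_ball_finite[OF finite_atLeastAtMost_int elim(1)] elim(2) show ?case
    proof eventually_elim
      case (elim n)
      show ?case
      proof (intro allI count_near_le_of_window_counts[OF h])
        fix k :: int assume "\<bar>k\<bar> \<le> \<lceil>(real L + r) / h\<rceil>"
        then have "k \<in> {-K..K}" by (auto simp: K_def)
        then have "(\<Sum>i<n. indicator (W k) (X i w)) < real n * tau" using elim(1) by blast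
        then show "(\<Sum>i<n. indicator {of_int k * h - r .. of_int k * h + h + r} (X i w)) \<le> real n * tau"
          unfolding W_def by (rule less_imp_le)
      qed (use elim(2) in linarith)
    qed
  qed
qed

lemma AE_eventually_sum_truncated_ln_gt:
  assumes g_le: "\<And>x. g x \<le> c0" and T: "T \<ge> 0"
    and int_ln: "integrable lborel (\<lambda>x. ln (g x) * g x)" and \<eta>: "\<eta> > 0"
  shows "AE w in M. eventually (\<lambda>n. real n * ((\<integral>x. ln (g x) * g x \<partial>lborel) - \<eta>)
    < (\<Sum>i<n. max (ln (g (X i w))) (- T))) sequentially"
proof -
  define W where "W x = max (ln (g x)) (- T)" for x
  have [measurable]: "W \<in> borel_measurable borel" unfolding W_def by measurable
  have "ln (g x) \<le> \<bar>ln c0\<bar>" for x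
  proof (cases "g x > 0")
    case True
    then have "ln (g x) \<le> ln c0" using g_le[of x] by (subst ln_le_cancel_iff) auto
    then show ?thesis by linarith
  qed (use g_nonneg[of x] in simp)
  then have W: "- T \<le> W x" "W x \<le> \<bar>ln c0\<bar>" for x using T by (auto simp: W_def)
  have "integrable lborel (\<lambda>x. g x * W x)"
  proof (rule Bochner_Integration.integrable_bound)
    show "integrable lborel (\<lambda>x. g x * (\<bar>ln c0\<bar> + T))" using integrable_g by simp
    show "AE x in lborel. norm (g x * W x) \<le> norm (g x * (\<bar>ln c0\<bar> + T))"
    proof (intro AE_I2)
      fix x
      have "\<bar>W x\<bar> \<le> \<bar>ln c0\<bar> + T" unfolding abs_le_iff using W[of x] T abs_ge_zero[of "ln c0"] by linarith
      then show "norm (g x * W x) \<le> norm (g x * (\<bar>ln c0\<bar> + T))"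
        using g_nonneg[of x] T by (simp add: abs_mult mult_left_mono)
    qed
  qed simp
  then have "(\<integral>x. ln (g x) * g x \<partial>lborel) \<le> (\<integral>x. g x * W x \<partial>lborel)"
    using int_ln g_nonneg by (intro integral_mono) (auto simp: W_def mult.commute intro!: mult_left_mono)
  then have "expectation (\<lambda>w. - W (X i w)) \<le> - (\<integral>x. ln (g x) * g x \<partial>lborel)" for i
    by (subst expectation_eq) auto
  moreover have "AE w in M. - W (X i w) \<in> {- \<bar>ln c0\<bar> .. T}" for i
  proof (intro AE_I2)
    fix w show "- W (X i w) \<in> {- \<bar>ln c0\<bar> .. T}" using W[of "X i w"] by auto
  qed
  ultimately have "AE w in M. eventually (\<lambda>n. (\<Sum>i<n. - W (X i w))
      < real n * (- (\<integral>x. ln (g x) * g x \<partial>lborel) + \<eta>)) sequentially"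
    by (intro AE_eventually_sum_less_of_bounded[where lo = "- \<bar>ln c0\<bar>" and hi = T]
        indep_vars_compose2[OF indep] \<eta>) auto
  then show ?thesis
  proof eventually_elim
    case (elim w)
    then show ?case by (rule eventually_mono) (simp add: W_def sum_negf algebra_simps)
  qed
qed

lemma AE_eventually_sum_ln_deficit_less:
  assumes a: "0 < a" "a < 1" and fin: "(\<integral>\<^sup>+x. ennreal (g x powr a) \<partial>lborel) < \<infinity>"
    and \<eta>: "\<eta> > 0"
  obtains T where "T \<ge> 0"
    "AE w in M. eventually (\<lambda>n. (\<Sum>i<n. max (- T - ln (g (X i w))) 0) < real n * \<eta>) sequentially"
proof -
  define l where "l = 1 - a"
  have l: "l > 0" "1 - l = a" using a by (auto simp: l_def)
  define I where "I = enn2real (\<integral>\<^sup>+x. ennreal (g x powr a) \<partial>lborel)"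
  have I: "I \<ge> 0" "(\<integral>\<^sup>+x. ennreal (g x powr a) \<partial>lborel) = ennreal I"
    using fin by (auto simp: I_def ennreal_enn2real_if less_top)
  obtain T where T: "T \<ge> 0" "exp (- (l * T)) * I < exp (l * \<eta>) - 1"
    using exists_exp_neg_mult_less[OF l(1) I(1), of "exp (l * \<eta>) - 1"] l \<eta> by auto
  define D where "D x = max (- T - ln (g x)) 0" for x
  have [measurable]: "D \<in> borel_measurable borel" unfolding D_def by measurable
  have "AE w in M. eventually (\<lambda>n. (\<Sum>i<n. D (X i w)) < real n * \<eta>) sequentially"
  proof (rule AE_eventually_sum_less_of_mgf_le[OF _ l(1), where q = "1 + exp (- (l * T)) * I"])
    show "indep_vars (\<lambda>_. borel) (\<lambda>i w. D (X i w)) UNIV"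
      by (rule indep_vars_compose2[OF indep]) auto
    show "1 + exp (- (l * T)) * I < exp (l * \<eta>)" using T by simp
    fix i
    have "ennreal (g x) * ennreal (exp (l * D x))
        \<le> ennreal (g x) + ennreal (exp (- (l * T))) * ennreal (g x powr a)" for x
    proof -
      have "g x * exp (l * D x) \<le> g x + exp (- (l * T)) * g x powr a"
        using mult_exp_truncated_neg_ln_le[of "g x" l T] g_nonneg[of x] by (simp add: D_def l(2))
      then show ?thesis using g_nonneg[of x]
        by (simp add: ennreal_mult[symmetric] ennreal_plus[symmetric] del: ennreal_plus ennreal_mult')
    qed
    then have "(\<integral>\<^sup>+x. ennreal (g x) * ennreal (exp (l * D x)) \<partial>lborel)
        \<le> (\<integral>\<^sup>+x. ennreal (g x) + ennreal (exp (- (l * T))) * ennreal (g x powr a) \<partial>lborel)"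
      by (rule nn_integral_mono)
    then have "(\<integral>\<^sup>+w. ennreal (exp (l * D (X i w))) \<partial>M)
        \<le> (\<integral>\<^sup>+x. ennreal (g x) + ennreal (exp (- (l * T))) * ennreal (g x powr a) \<partial>lborel)"
      by (subst nn_integral_eq) measurable
    also have "\<dots> = 1 + ennreal (exp (- (l * T))) * ennreal I"
      by (subst nn_integral_add) (auto simp: nn_integral_cmult nn_integral_g I(2))
    also have "\<dots> = ennreal (1 + exp (- (l * T)) * I)"
      using I(1) by (simp add: ennreal_mult)
    finally show "(\<integral>\<^sup>+w. ennreal (exp (l * D (X i w))) \<partial>M) \<le> ennreal (1 + exp (- (l * T)) * I)" .
  qed
  then show ?thesis using that T(1) by (simp add: D_def)
qed

lemma AE_eventually_sum_ln_gt:
  assumes g_le: "\<And>x. g x \<le> c0" and a: "0 < a" "a < 1"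
    and fin: "(\<integral>\<^sup>+x. ennreal (g x powr a) \<partial>lborel) < \<infinity>"
    and int_ln: "integrable lborel (\<lambda>x. ln (g x) * g x)" and \<eta>: "\<eta> > 0"
  shows "AE w in M. eventually (\<lambda>n. real n * ((\<integral>x. ln (g x) * g x \<partial>lborel) - \<eta>)
    < (\<Sum>i<n. ln (g (X i w)))) sequentially"
proof -
  obtain T where T: "T \<ge> 0" and deficit: "AE w in M. eventually (\<lambda>n.
      (\<Sum>i<n. max (- T - ln (g (X i w))) 0) < real n * (\<eta> / 2)) sequentially"
    using AE_eventually_sum_ln_deficit_less[OF a fin, of "\<eta> / 2"] \<eta> by auto
  have truncated: "AE w in M. eventually (\<lambda>n. real n * ((\<integral>x. ln (g x) * g x \<partial>lborel) - \<eta> / 2)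
      < (\<Sum>i<n. max (ln (g (X i w))) (- T))) sequentially"
    using \<eta> by (intro AE_eventually_sum_truncated_ln_gt[OF g_le T int_ln]) simp
  show ?thesis
    using deficit truncated
  proof eventually_elim
    case (elim w)
    from elim(1,2) show ?case
    proof eventually_elim
      case (elim n)
      have "(\<Sum>i<n. ln (g (X i w)))
          = (\<Sum>i<n. max (ln (g (X i w))) (- T) - max (- T - ln (g (X i w))) 0)"
        by (intro sum.cong) (auto simp: max_def)
      also have "\<dots> = (\<Sum>i<n. max (ln (g (X i w))) (- T)) - (\<Sum>i<n. max (- T - ln (g (X i w))) 0)"
        by (rule sum_subtractf)
      finally show ?case using elim by (simp add: algebra_simps)
    qed
  qed
qed

lemma AE_eventually_sum_eln_gt:
  assumes "\<And>x. g x \<le> c0" and "0 < a" "a < 1"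
    and "(\<integral>\<^sup>+x. ennreal (g x powr a) \<partial>lborel) < \<infinity>"
    and "integrable lborel (\<lambda>x. ln (g x) * g x)" and "\<eta> > 0"
  shows "AE w in M. eventually (\<lambda>n. ereal (real n * ((\<integral>x. ln (g x) * g x \<partial>lborel) - \<eta>))
    < (\<Sum>i<n. eln (g (X i w)))) sequentially"
  using AE_eventually_sum_ln_gt[OF assms] AE_g_pos
proof eventually_elim
  case (elim w)
  then have "(\<Sum>i<n. eln (g (X i w))) = ereal (\<Sum>i<n. ln (g (X i w)))" for n
    by (simp add: eln_def)
  with elim(1) show ?case by (auto elim: eventually_mono)
qed

lemma AE_eventually_loglik_gt:
  assumes g: "g = mix_dens f0 m al mu s"
    and f0_nonneg: "\<And>x. f0 x \<ge> 0" and f0_le: "\<And>x. f0 x \<le> v0"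
    and f0_tail: "\<And>x. x \<noteq> 0 \<Longrightarrow> f0 x \<le> v1 * \<bar>x\<bar> powr (- beta)"
    and [measurable]: "f0 \<in> borel_measurable borel"
    and v1: "v1 > 0" and beta: "beta > 1" and va: "valid_mix m al" and s: "s > 0"
    and int_ln: "integrable lborel (\<lambda>x. ln (g x) * g x)" and \<eta>: "\<eta> > 0"
  shows "AE w in M. eventually (\<lambda>n. ereal (real n * ((\<integral>x. ln (g x) * g x \<partial>lborel) - \<eta>))
    < loglik f0 m al mu s X n w) sequentially"
proof -
  define a where "a = (1 + beta) / (2 * beta)"
  have a: "0 < a" "a < 1" "beta * a > 1" using beta by (auto simp: a_def field_simps)
  have g_le: "g x \<le> v0 / s" for x
    unfolding g by (intro mix_dens_le[OF va] ls_dens_le f0_le s)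
  have "(\<integral>\<^sup>+x. ennreal (g x powr a) \<partial>lborel) < \<infinity>"
    unfolding g using v1 beta a
    by (intro mix_dens_powr_nn_integral_finite[OF f0_nonneg f0_le f0_tail _ _ _ va s]) auto
  from AE_eventually_sum_eln_gt[OF g_le a(1,2) this int_ln \<eta>] show ?thesis
    by (simp add: loglik_def g)
qed

end


theorem lemma2:
  fixes M :: "'w measure" and X :: "nat \<Rightarrow> 'w \<Rightarrow> real"
    and f0 :: "real \<Rightarrow> real" and m :: nat
    and alpha0 mu0 :: "nat \<Rightarrow> real" and sigma0 :: real
    and v0 v1 beta eps :: real
  defines "g0 \<equiv> mix_dens f0 m alpha0 mu0 sigma0"
  defines "K0 \<equiv> integral\<^sup>L lborel (\<lambda>x. ln (g0 x) * g0 x)"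
  defines "Delta \<equiv> v0 / exp (K0 - 1)"
  defines "a \<equiv> (1 + beta) / (2 * beta)"
  defines "b \<equiv> 2 * (beta + 1) / (beta - 1)"
  defines "eps0 \<equiv> (3 * real m * b * v0 / sigma0) powr (- 1 / (1 - a))"
  assumes "prob_space M"
    and "m > 0"
    \<comment> \<open>f(.;0,1) is a probability density on the reals\<close>
    and f0_nonneg: "\<forall>x. f0 x \<ge> 0"
    and f0_int: "integrable lborel f0" "integral\<^sup>L lborel f0 = 1"
    \<comment> \<open>true parameter\<close>
    and "valid_mix m alpha0" and "sigma0 > 0"
    \<comment> \<open>i.i.d. sample with density g(.;Psi0,sigma0)\<close>
    and "prob_space.indep_vars M (\<lambda>_. borel) X UNIV"
    and "\<forall>i. distributed M lborel (X i) (\<lambda>x. ennreal (g0 x))"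
    \<comment> \<open>C1 -- C4\<close>
    and C1: "cond_C1 f0 m"
    and C2: "integrable lborel (\<lambda>x. \<bar>ln (g0 x)\<bar> * g0 x)"
    and C3: "v0 > 0" "v1 > 0" "beta > 1"
       "\<forall>x. f0 x \<le> v0 \<and> (x \<noteq> 0 \<longrightarrow> f0 x \<le> v1 * \<bar>x\<bar> powr (- beta))"
    and C4: "continuous_on UNIV f0"
    \<comment> \<open>choice of epsilon\<close>
    and "eps > 0"
    and D1: "eps \<le> eps0"
    and D2: "eps \<le> (v1 / v0) powr (- 2 / (beta + 1))"
    and D3: "ln v0 / b + (1 - 1 / b) * ln v1 + (beta - 1) / 4 * ln eps \<le> K0 - 1"
  shows "AE w in M.
      ((\<lambda>n. (SUP p \<in> {(al, mu, s). valid_mix m al \<and> s \<ge> Delta}.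
                 loglik f0 m (fst p) (fst (snd p)) (snd (snd p)) X n w)
             - loglik f0 m alpha0 mu0 sigma0 X n w) \<longlonglongrightarrow> -\<infinity>)
    \<and> ((\<lambda>n. (SUP p \<in> {(al, mu, s). valid_mix m al \<and> 0 < s \<and> s \<le> eps}.
                 loglik f0 m (fst p) (fst (snd p)) (snd (snd p)) X n w)
             - loglik f0 m alpha0 mu0 sigma0 X n w) \<longlonglongrightarrow> -\<infinity>)"
proof -
  interpret prob_space M by fact
  have f0_le: "\<And>x. f0 x \<le> v0" and f0_tail: "\<And>x. x \<noteq> 0 \<Longrightarrow> f0 x \<le> v1 * \<bar>x\<bar> powr (- beta)"
    using C3(4) by auto
  have [measurable]: "f0 \<in> borel_measurable borel"
    using C4 by (rule borel_measurable_continuous_onI)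
  interpret iid_sample M X g0
    using \<open>prob_space.indep_vars M (\<lambda>_. borel) X UNIV\<close> \<open>\<forall>i. distributed M lborel (X i) (\<lambda>x. ennreal (g0 x))\<close>
      f0_nonneg \<open>valid_mix m alpha0\<close> \<open>sigma0 > 0\<close>
    by unfold_locales (auto simp: g0_def intro!: mix_dens_nonneg)
  have "integrable lborel (\<lambda>x. ln (g0 x) * g0 x)"
    by (rule Bochner_Integration.integrable_bound[OF C2]) (auto simp: g0_def abs_mult)
  then have true_ll: "AE w in M. eventually (\<lambda>n.
      ereal (real n * (K0 - 1 / 2)) < loglik f0 m alpha0 mu0 sigma0 X n w) sequentially"
    unfolding K0_def using f0_nonneg C3(2,3) \<open>valid_mix m alpha0\<close> \<open>sigma0 > 0\<close>
    by (intro AE_eventually_loglik_gt[OF g0_def[THEN meta_eq_to_obj_eq] _ f0_le f0_tail]) auto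
  have ab: "a = (1 + beta) / (2 * beta)" "b = 2 * (beta + 1) / (beta - 1)"
    by (simp_all add: a_def b_def)
  have a: "a < 1" and b: "b > 0"
    using C3(3) by (auto simp: ab field_simps)
  have "eps powr (1 - a) \<le> 1 / (3 * real m * b * v0 / sigma0)"
    using D1 \<open>eps > 0\<close> \<open>m > 0\<close> b C3(1) \<open>sigma0 > 0\<close> a unfolding eps0_def
    by (intro powr_le_inverse_of_le_powr) auto
  then have "3 * (v0 / sigma0) * eps powr (1 - a) \<le> 1 / (real m * b)"
    using \<open>m > 0\<close> b C3(1) \<open>sigma0 > 0\<close> by (simp add: field_simps)
  moreover have "g0 x \<le> v0 / sigma0" for x
    unfolding g0_def by (intro mix_dens_le[OF \<open>valid_mix m alpha0\<close>] ls_dens_le f0_le \<open>sigma0 > 0\<close>)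
  ultimately have count: "AE w in M. eventually (\<lambda>n. \<forall>\<mu>.
      (\<Sum>i<n. if \<bar>X i w - \<mu>\<bar> < eps powr (1 - a) then 1 else 0) \<le> real n * (1 / (real m * b)))
      sequentially"
    using \<open>eps > 0\<close> \<open>m > 0\<close> b by (intro AE_eventually_uniform_count_le) auto
  show ?thesis
    using true_ll count
  proof eventually_elim
    case (elim w)
    have ll: "eventually (\<lambda>n. ereal (real n * (K0 - 1 / 2)) \<le> loglik f0 m alpha0 mu0 sigma0 X n w) sequentially"
      using elim(1) by (rule eventually_mono) (rule less_imp_le)
    show ?case
      apply (intro conjI ereal_diff_tendsto_MInfty[OF _ ll, where c = "K0 - 1"])
      subgoal unfolding Delta_def by (intro always_eventually allI loglik_SUP_large_sigma_le f0_le C3(1))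
      subgoal by simp
      subgoal
        using elim(2) by (elim eventually_mono)
          (intro loglik_SUP_small_sigma_le[where tau = "1 / (real m * b)",
            OF f0_le f0_tail C3(1-3) ab \<open>eps > 0\<close> D2 _ _ D3], use \<open>m > 0\<close> b in auto)
      subgoal by simp
      done
  qed
qed

end
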